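(* Let $u\in\mathcal{B}^N$, $m\in\mathbb{R}$, $\varepsilon>0$, $(r,\gamma)\in F(N,A,u,m)$, and $(t,\sigma)\in F(N,A,u,m-\varepsilon)$ such that $\sigma$ is a perfect matching in $\mathcal{F}(r)$ and $r_a>t_a$ for each $a\in A$. Suppose there is no $i\in N$ and $a\in A$ with $r_a>b_i>t_a$. Then there is $\Lambda>0$ such that (1) for each $0<\Lambda'\le\Lambda$, every bijection $\mu$ maximizing $\sum_{i\in N}\log\lambda_{i\mu(i)}(u,r,\Lambda')$ satisfies $u_i(r_{\mu(i)},\mu(i))=u_i(r_{\gamma'(i)},\gamma'(i))$ for all $i\in N$ and all $\gamma'$ with $(r,\gamma')\in F(N,A,u,m)$; and (2) $\lambda_{i\sigma(i)}(u,r,\Lambda)(r_{\sigma(i)}-t_{\sigma(i)})\ge\lambda_{ia}(u,r,\Lambda)(r_a-t_a)$ for all $i\in N$ and $a\in A$, i.e. $(r-t,\sigma)$ is envy-free in the economy with consumption space $\mathbb{R}_{++}\times A$ where agent $i$'s utility is $(x_a,a)\mapsto\lambda_{ia}(u,r,\Lambda)x_a$ and the total to distribute is $\sum_{a\in A}(r_a-t_a)$.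
   Context: Fix a finite set $\{\rho_1,\dots,\rho_k\}\subseteq\mathbb{R}_+$ with $\rho_1=0$. $N=\{1,\dots,n\}$ agents, $A$ a set of $n$ rooms. $\mathcal{B}$ is the set of utility functions $u_i(r_a,a)=v^i_a-r_a-\rho_i\max\{0,r_a-b_i\}$ with $v^i\in\mathbb{R}^A$, $b_i\ge0$, $\rho_i\in\{\rho_1,\dots,\rho_k\}$. An allocation for $(N,A,u,m)$ is $(r,\sigma)$ with $\sigma:N\to A$ a bijection, $r\in\mathbb{R}^A$, $\sum_ar_a=m$; envy-free means $u_i(r_{\sigma(i)},\sigma(i))\ge u_i(r_{\sigma(j)},\sigma(j))$ for all $i,j$; $F(N,A,u,m)$ is the set of envy-free allocations. $\lambda_{ia}(u,r):=1+\rho_i$ if $r_a>b_i$, else $1$. For $r$ with some envy-free $(r,\gamma)$: $\mathcal{F}(r)$ is the bipartite graph on $N\cup A$ with edge $(i,a)$ iff $u_i(r_{\gamma(i)},\gamma(i))=u_i(r_a,a)$, and a perfect matching in $\mathcal{F}(r)$ is a bijection $N\to A$ using only its edges; for $\Lambda>0$, $\lambda_{ia}(u,r,\Lambda):=\lambda_{ia}(u,r)$ if $u_i(r_{\gamma(i)},\gamma(i))=u_i(r_a,a)$ and $:=\Lambda$ otherwise. *)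

theory Defs
  imports Complex_Main
begin

text \<open>A utility profile in B^N is given by valuations v, budgets b, and penalty
  rates rho (each taken from a fixed finite set Rho of nonnegative reals containing 0).\<close>

definition util :: "(nat \<Rightarrow> 'a \<Rightarrow> real) \<Rightarrow> (nat \<Rightarrow> real) \<Rightarrow> (nat \<Rightarrow> real)
                    \<Rightarrow> nat \<Rightarrow> real \<Rightarrow> 'a \<Rightarrow> real" where
  "util v b rho i x a = v i a - x - rho i * max 0 (x - b i)"

definition EF :: "nat set \<Rightarrow> 'a set \<Rightarrow> (nat \<Rightarrow> real \<Rightarrow> 'a \<Rightarrow> real) \<Rightarrow> real
                  \<Rightarrow> (('a \<Rightarrow> real) \<times> (nat \<Rightarrow> 'a)) set" where
  "EF N A u m = {(r, \<sigma>). bij_betw \<sigma> N A \<and> sum r A = m \<and>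
      (\<forall>i\<in>N. \<forall>j\<in>N. u i (r (\<sigma> j)) (\<sigma> j) \<le> u i (r (\<sigma> i)) (\<sigma> i))}"

definition lam :: "(nat \<Rightarrow> real) \<Rightarrow> (nat \<Rightarrow> real) \<Rightarrow> ('a \<Rightarrow> real) \<Rightarrow> nat \<Rightarrow> 'a \<Rightarrow> real" where
  "lam b rho r i a = (if r a > b i then 1 + rho i else 1)"

definition lamL :: "(nat \<Rightarrow> real \<Rightarrow> 'a \<Rightarrow> real) \<Rightarrow> (nat \<Rightarrow> real) \<Rightarrow> (nat \<Rightarrow> real)
                    \<Rightarrow> ('a \<Rightarrow> real) \<Rightarrow> (nat \<Rightarrow> 'a) \<Rightarrow> real \<Rightarrow> nat \<Rightarrow> 'a \<Rightarrow> real" where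
  "lamL u b rho r \<gamma> \<Lambda> i a =
     (if u i (r (\<gamma> i)) (\<gamma> i) = u i (r a) a then lam b rho r i a else \<Lambda>)"

definition perfect_matching_F :: "nat set \<Rightarrow> 'a set \<Rightarrow> (nat \<Rightarrow> real \<Rightarrow> 'a \<Rightarrow> real)
                    \<Rightarrow> ('a \<Rightarrow> real) \<Rightarrow> (nat \<Rightarrow> 'a) \<Rightarrow> (nat \<Rightarrow> 'a) \<Rightarrow> bool" where
  "perfect_matching_F N A u r \<gamma> \<sigma> \<longleftrightarrow> bij_betw \<sigma> N A \<and>
      (\<forall>i\<in>N. u i (r (\<gamma> i)) (\<gamma> i) = u i (r (\<sigma> i)) (\<sigma> i))"

end

theory Submission
  imports Defs
begin

text \<open>Lowering rents from \<open>r\<close> to \<open>t\<close> raises agent \<open>i\<close>'s utility for room \<open>a\<close> by exactly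
  \<open>\<lambda>\<^sub>i\<^sub>a(u,r) (r\<^sub>a - t\<^sub>a)\<close>, because no kink \<open>b\<^sub>i\<close> lies strictly between the two rents. Comparing
  with the envy-freeness of \<open>(t,\<sigma>)\<close> along the edges of \<open>\<F>(r)\<close> gives (2) on those edges; off the
  edges the weight is \<open>\<Lambda>\<close>, which is harmless once \<open>\<Lambda>\<close> is below every ratio \<open>(r\<^sub>a' - t\<^sub>a') / (r\<^sub>a - t\<^sub>a)\<close>.
  For (1): \<open>\<sigma>\<close> uses only edges, so its log-weight is nonnegative, while any assignment using a
  non-edge has log-weight at most \<open>ln \<Lambda>' + \<Sum>\<^sub>i ln (1 + \<rho>\<^sub>i)\<close>, which is negative for small \<open>\<Lambda>'\<close>.
  Hence a maximizer uses only edges of \<open>\<F>(r)\<close>, and all envy-free assignments at \<open>r\<close> give every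
  agent the same utility.\<close>

lemma EF_no_envy:
  assumes "(r, \<gamma>) \<in> EF N A u m" "i \<in> N" "a \<in> A"
  shows "u i (r a) a \<le> u i (r (\<gamma> i)) (\<gamma> i)"
proof -
  have bij: "bij_betw \<gamma> N A" and envy_free: "\<forall>i\<in>N. \<forall>j\<in>N. u i (r (\<gamma> j)) (\<gamma> j) \<le> u i (r (\<gamma> i)) (\<gamma> i)"
    using assms(1) unfolding EF_def by auto
  obtain j where "j \<in> N" "\<gamma> j = a"
    using bij assms(3) by (metis bij_betw_iff_bijections)
  then show ?thesis using envy_free assms(2) by metis
qed

lemma EF_utility_unique:
  assumes "(r, \<gamma>) \<in> EF N A u m" "(r, \<gamma>') \<in> EF N A u m'" "i \<in> N"
  shows "u i (r (\<gamma>' i)) (\<gamma>' i) = u i (r (\<gamma> i)) (\<gamma> i)"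
proof -
  have "\<gamma> i \<in> A" "\<gamma>' i \<in> A"
    using assms unfolding EF_def by (auto dest: bij_betwE)
  then show ?thesis
    using EF_no_envy[OF assms(1,3)] EF_no_envy[OF assms(2,3)] by (meson order_antisym)
qed

lemma util_decrease_eq_lam:
  assumes "t a < r a" and "\<not> (r a > b i \<and> b i > t a)"
  shows "util v b rho i (t a) a - util v b rho i (r a) a = lam b rho r i a * (r a - t a)"
  using assms unfolding util_def lam_def
  by (cases "r a > b i") (auto simp: max_def algebra_simps)

lemma lam_ge_one: "0 \<le> rho i \<Longrightarrow> 1 \<le> lam b rho r i a"
  by (simp add: lam_def)

lemma lamL_pos: "0 \<le> rho i \<Longrightarrow> 0 < \<Lambda> \<Longrightarrow> 0 < lamL u b rho r \<gamma> \<Lambda> i a"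
  by (simp add: lamL_def lam_def)

lemma lamL_le: "0 \<le> rho i \<Longrightarrow> \<Lambda> \<le> 1 \<Longrightarrow> lamL u b rho r \<gamma> \<Lambda> i a \<le> 1 + rho i"
  by (simp add: lamL_def lam_def)

lemma sum_nonneg_term_lower_bound:
  fixes g c :: "'i \<Rightarrow> real"
  assumes "finite I" "i \<in> I" "0 \<le> sum g I"
    and "\<And>j. j \<in> I \<Longrightarrow> g j \<le> c j" "\<And>j. j \<in> I \<Longrightarrow> 0 \<le> c j"
  shows "- sum c I \<le> g i"
proof -
  have "0 \<le> g i + sum g (I - {i})"
    using assms(1-3) by (simp add: sum.remove)
  also have "\<dots> \<le> g i + sum c (I - {i})"
    using assms(4) by (intro add_left_mono sum_mono) auto
  also have "\<dots> \<le> g i + sum c I"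
    using assms(1,2,5) by (simp add: sum.remove)
  finally show ?thesis by simp
qed

lemma exists_uniform_ratio_bound:
  fixes d :: "'a \<Rightarrow> real"
  assumes "finite A" "\<forall>a\<in>A. 0 < d a" "0 < c"
  shows "\<exists>\<Lambda>>0. \<Lambda> < c \<and> (\<forall>a\<in>A. \<forall>a'\<in>A. \<Lambda> * d a \<le> d a')"
proof -
  define S where "S = insert (c / 2) ((\<lambda>(a, a'). d a' / d a) ` (A \<times> A))"
  have S: "finite S" "S \<noteq> {}" "\<forall>s\<in>S. 0 < s"
    using assms by (auto simp: S_def)
  have "Min S \<le> d a' / d a" if "a \<in> A" "a' \<in> A" for a a'
    using S that by (intro Min_le) (auto simp: S_def)
  then have "\<forall>a\<in>A. \<forall>a'\<in>A. Min S * d a \<le> d a'"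
    using assms(2) by (simp add: pos_le_divide_eq)
  moreover have "Min S \<le> c / 2" using S by (intro Min_le) (auto simp: S_def)
  moreover have "0 < Min S" using S by simp
  ultimately show ?thesis using assms(3) by (intro exI[of _ "Min S"]) auto
qed

lemma lamL_scaled_envy_free:
  fixes v :: "nat \<Rightarrow> 'a \<Rightarrow> real" and b rho :: "nat \<Rightarrow> real"
  defines "u \<equiv> util v b rho"
  assumes t_EF: "(t, \<sigma>) \<in> EF N A u m"
    and pm: "perfect_matching_F N A u r \<gamma> \<sigma>"
    and r_gt_t: "\<forall>a\<in>A. t a < r a"
    and no_between: "\<forall>a\<in>A. \<not> (r a > b i \<and> b i > t a)"
    and rho: "0 \<le> rho i"
    and \<Lambda>: "\<forall>a\<in>A. \<forall>a'\<in>A. \<Lambda> * (r a - t a) \<le> r a' - t a'"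
    and i: "i \<in> N" and a: "a \<in> A"
  shows "lamL u b rho r \<gamma> \<Lambda> i a * (r a - t a)
           \<le> lamL u b rho r \<gamma> \<Lambda> i (\<sigma> i) * (r (\<sigma> i) - t (\<sigma> i))"
proof -
  have \<sigma>i: "\<sigma> i \<in> A" and edge: "u i (r (\<gamma> i)) (\<gamma> i) = u i (r (\<sigma> i)) (\<sigma> i)"
    using pm i unfolding perfect_matching_F_def by (auto dest: bij_betwE)
  have lamL_\<sigma>: "lamL u b rho r \<gamma> \<Lambda> i (\<sigma> i) = lam b rho r i (\<sigma> i)"
    using edge by (simp add: lamL_def)
  have gain: "u i (t x) x - u i (r x) x = lam b rho r i x * (r x - t x)" if "x \<in> A" for x
    unfolding u_def using r_gt_t no_between that by (intro util_decrease_eq_lam) auto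
  show ?thesis
  proof (cases "u i (r (\<gamma> i)) (\<gamma> i) = u i (r a) a")
    case True
    have "u i (t a) a \<le> u i (t (\<sigma> i)) (\<sigma> i)"
      using EF_no_envy[OF t_EF i a] .
    then have "lam b rho r i a * (r a - t a) \<le> lam b rho r i (\<sigma> i) * (r (\<sigma> i) - t (\<sigma> i))"
      using gain[OF a] gain[OF \<sigma>i] True edge by linarith
    then show ?thesis using True lamL_\<sigma> by (simp add: lamL_def)
  next
    case False
    have "\<Lambda> * (r a - t a) \<le> r (\<sigma> i) - t (\<sigma> i)"
      using \<Lambda> a \<sigma>i by blast
    also have "\<dots> \<le> lam b rho r i (\<sigma> i) * (r (\<sigma> i) - t (\<sigma> i))"
      using lam_ge_one[of rho i, OF rho] r_gt_t \<sigma>i by (intro mult_le_cancel_right1[THEN iffD2]) auto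
    finally show ?thesis using False lamL_\<sigma> by (simp add: lamL_def)
  qed
qed

lemma log_weight_maximizer_uses_edges:
  assumes finN: "finite N"
    and rho: "\<forall>i\<in>N. 0 \<le> rho i"
    and pm: "perfect_matching_F N A u r \<gamma> \<sigma>"
    and \<Lambda>: "0 < \<Lambda>" "\<Lambda> < exp (- (\<Sum>i\<in>N. ln (1 + rho i)))"
    and \<mu>: "(\<Sum>i\<in>N. ln (lamL u b rho r \<gamma> \<Lambda> i (\<sigma> i)))
              \<le> (\<Sum>i\<in>N. ln (lamL u b rho r \<gamma> \<Lambda> i (\<mu> i)))"
    and i: "i \<in> N"
  shows "u i (r (\<mu> i)) (\<mu> i) = u i (r (\<gamma> i)) (\<gamma> i)"
proof (rule ccontr)
  assume off_edge: "u i (r (\<mu> i)) (\<mu> i) \<noteq> u i (r (\<gamma> i)) (\<gamma> i)"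
  define C where "C = (\<Sum>i\<in>N. ln (1 + rho i))"
  have "0 \<le> C" unfolding C_def using rho by (intro sum_nonneg) simp
  then have "exp (- C) \<le> 1" by simp
  then have \<Lambda>_le_1: "\<Lambda> \<le> 1" using \<Lambda>(2) unfolding C_def by linarith
  have "0 \<le> ln (lamL u b rho r \<gamma> \<Lambda> j (\<sigma> j))" if "j \<in> N" for j
  proof -
    have "lamL u b rho r \<gamma> \<Lambda> j (\<sigma> j) = lam b rho r j (\<sigma> j)"
      using pm that by (simp add: perfect_matching_F_def lamL_def)
    then show ?thesis using lam_ge_one[of rho j b r "\<sigma> j"] rho that by simp
  qed
  then have "0 \<le> (\<Sum>j\<in>N. ln (lamL u b rho r \<gamma> \<Lambda> j (\<mu> j)))"
    using \<mu> by (meson order_trans sum_nonneg)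
  moreover have "ln (lamL u b rho r \<gamma> \<Lambda> j a) \<le> ln (1 + rho j)" if "j \<in> N" for j a
  proof -
    have "0 \<le> rho j" using rho that by blast
    then show ?thesis
      using lamL_pos[of rho j \<Lambda>] lamL_le[of rho j \<Lambda>] \<Lambda>(1) \<Lambda>_le_1
      by (subst ln_le_cancel_iff) auto
  qed
  ultimately have "- C \<le> ln (lamL u b rho r \<gamma> \<Lambda> i (\<mu> i))"
    unfolding C_def using finN i rho
    by (intro sum_nonneg_term_lower_bound[where g = "\<lambda>j. ln (lamL u b rho r \<gamma> \<Lambda> j (\<mu> j))"]) auto
  also have "\<dots> = ln \<Lambda>"
    using off_edge by (simp add: lamL_def)
  also have "\<dots> < - C"
    using \<Lambda> unfolding C_def by (metis ln_exp ln_less_cancel_iff exp_gt_zero)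
  finally show False by simp
qed

theorem lemma8:
  fixes n :: nat and A :: "'a set" and Rho :: "real set"
    and v :: "nat \<Rightarrow> 'a \<Rightarrow> real" and b rho :: "nat \<Rightarrow> real"
    and m \<epsilon> :: real and r t :: "'a \<Rightarrow> real" and \<gamma> \<sigma> :: "nat \<Rightarrow> 'a"
  defines "N \<equiv> {1..n}" and "u \<equiv> util v b rho"
  assumes finA: "finite A" and cardA: "card A = n"
    and Rho: "finite Rho" "0 \<in> Rho" "\<forall>x\<in>Rho. x \<ge> 0"
    and b_nonneg: "\<forall>i\<in>N. b i \<ge> 0" and rho_in: "\<forall>i\<in>N. rho i \<in> Rho"
    and eps: "\<epsilon> > 0"
    and r_EF: "(r, \<gamma>) \<in> EF N A u m"
    and t_EF: "(t, \<sigma>) \<in> EF N A u (m - \<epsilon>)"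
    and pm: "perfect_matching_F N A u r \<gamma> \<sigma>"
    and r_gt_t: "\<forall>a\<in>A. r a > t a"
    and no_between: "\<not> (\<exists>i\<in>N. \<exists>a\<in>A. r a > b i \<and> b i > t a)"
  shows "\<exists>\<Lambda>>0.
     (\<forall>\<Lambda>'. 0 < \<Lambda>' \<and> \<Lambda>' \<le> \<Lambda> \<longrightarrow>
        (\<forall>\<mu>. bij_betw \<mu> N A \<and>
              (\<forall>\<mu>'. bij_betw \<mu>' N A \<longrightarrow>
                 (\<Sum>i\<in>N. ln (lamL u b rho r \<gamma> \<Lambda>' i (\<mu>' i)))
                   \<le> (\<Sum>i\<in>N. ln (lamL u b rho r \<gamma> \<Lambda>' i (\<mu> i))))
           \<longrightarrow> (\<forall>i\<in>N. \<forall>\<gamma>'. (r, \<gamma>') \<in> EF N A u m \<longrightarrow>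
                  u i (r (\<mu> i)) (\<mu> i) = u i (r (\<gamma>' i)) (\<gamma>' i)))) \<and>
     (\<forall>i\<in>N. \<forall>a\<in>A. lamL u b rho r \<gamma> \<Lambda> i (\<sigma> i) * (r (\<sigma> i) - t (\<sigma> i))
                    \<ge> lamL u b rho r \<gamma> \<Lambda> i a * (r a - t a))"
proof -
  have finN: "finite N" by (simp add: N_def)
  have rho: "\<forall>i\<in>N. 0 \<le> rho i" using rho_in Rho(3) by auto
  define C where "C = (\<Sum>i\<in>N. ln (1 + rho i))"
  obtain \<Lambda> where \<Lambda>: "0 < \<Lambda>" "\<Lambda> < exp (- C)"
    and ratio: "\<forall>a\<in>A. \<forall>a'\<in>A. \<Lambda> * (r a - t a) \<le> r a' - t a'"
    using exists_uniform_ratio_bound[OF finA, of "\<lambda>a. r a - t a" "exp (- C)"] r_gt_t by auto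
  show ?thesis
  proof (intro exI[of _ \<Lambda>] conjI allI impI ballI)
    fix \<Lambda>' \<mu> i \<gamma>'
    assume \<Lambda>': "0 < \<Lambda>' \<and> \<Lambda>' \<le> \<Lambda>"
      and \<mu>: "bij_betw \<mu> N A \<and> (\<forall>\<mu>'. bij_betw \<mu>' N A \<longrightarrow>
             (\<Sum>i\<in>N. ln (lamL u b rho r \<gamma> \<Lambda>' i (\<mu>' i)))
               \<le> (\<Sum>i\<in>N. ln (lamL u b rho r \<gamma> \<Lambda>' i (\<mu> i))))"
      and i: "i \<in> N" and \<gamma>': "(r, \<gamma>') \<in> EF N A u m"
    have "bij_betw \<sigma> N A" using pm by (simp add: perfect_matching_F_def)
    then have max: "(\<Sum>i\<in>N. ln (lamL u b rho r \<gamma> \<Lambda>' i (\<sigma> i)))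
                 \<le> (\<Sum>i\<in>N. ln (lamL u b rho r \<gamma> \<Lambda>' i (\<mu> i)))"
      using \<mu> by blast
    have "0 < \<Lambda>'" "\<Lambda>' < exp (- C)" using \<Lambda>' \<Lambda>(2) by auto
    then have "u i (r (\<mu> i)) (\<mu> i) = u i (r (\<gamma> i)) (\<gamma> i)"
      unfolding C_def by (rule log_weight_maximizer_uses_edges[OF finN rho pm _ _ max i])
    then show "u i (r (\<mu> i)) (\<mu> i) = u i (r (\<gamma>' i)) (\<gamma>' i)"
      using EF_utility_unique[OF r_EF \<gamma>' i] by simp
  next
    fix i a assume "i \<in> N" "a \<in> A"
    then show "lamL u b rho r \<gamma> \<Lambda> i a * (r a - t a)
                 \<le> lamL u b rho r \<gamma> \<Lambda> i (\<sigma> i) * (r (\<sigma> i) - t (\<sigma> i))"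
      using t_EF pm r_gt_t no_between rho ratio unfolding u_def
      by (intro lamL_scaled_envy_free) blast+
  qed (use \<Lambda>(1) in simp)
qed

end
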